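(* There is a constant $C>0$ such that for every $n$ and every set $T\subseteq V_n$, the extension complexity of $\operatorname{dom}(P_{T\text{-cut}}(n))$ is at most $C\, n^2\, 2^{|T|}$.
   Context: $K_n=(V_n,E_n)$ is the complete graph on $n$ nodes. For $T\subseteq V_n$, a $T$-cut is an edge set $\delta(S)=\{\{v,w\}\in E_n : v\in S, w\notin S\}$ for some $S\subseteq V_n$ with $|S\cap T|$ odd. $P_{T\text{-cut}}(n)$ is the convex hull of characteristic vectors of $T$-cuts and $\operatorname{dom}(P_{T\text{-cut}}(n)) = P_{T\text{-cut}}(n)+\mathbb{R}^{E_n}_+$. Extension complexity $\operatorname{xc}(P)$ is the minimum number of facets of a polyhedron $Q$ with $P=\pi(Q)$ for a linear map $\pi$. *)

theory Defs
  imports "HOL-Analysis.Analysis" "HOL-Library.Function_Algebras"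
begin

(* Real vector structure on functions, pointwise.  Points of R^X are represented
   as functions X' => real that vanish outside the coordinate set X. *)
instantiation "fun" :: (type, real_vector) real_vector
begin
definition scaleR_fun :: "real \<Rightarrow> ('a \<Rightarrow> 'b) \<Rightarrow> 'a \<Rightarrow> 'b"
  where "scaleR_fun c f = (\<lambda>x. c *\<^sub>R f x)"
instance
  by standard (auto simp: scaleR_fun_def fun_eq_iff plus_fun_def algebra_simps)
end

definition V :: "nat \<Rightarrow> nat set" where
  "V n = {..<n}"

definition E :: "nat \<Rightarrow> nat set set" where
  "E n = {{v, w} | v w. v \<in> V n \<and> w \<in> V n \<and> v \<noteq> w}"

definition delta :: "nat \<Rightarrow> nat set \<Rightarrow> nat set set" where
  "delta n S = {e \<in> E n. \<exists>v w. e = {v, w} \<and> v \<in> S \<and> w \<notin> S}"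

definition T_cuts :: "nat \<Rightarrow> nat set \<Rightarrow> nat set set set" where
  "T_cuts n T = {delta n S | S. S \<subseteq> V n \<and> odd (card (S \<inter> T))}"

definition chi :: "nat set set \<Rightarrow> nat set \<Rightarrow> real" where
  "chi F = (\<lambda>e. if e \<in> F then 1 else 0)"

definition P_Tcut :: "nat \<Rightarrow> nat set \<Rightarrow> (nat set \<Rightarrow> real) set" where
  "P_Tcut n T = convex hull (chi ` T_cuts n T)"

definition dom_P :: "nat \<Rightarrow> (nat set \<Rightarrow> real) set \<Rightarrow> (nat set \<Rightarrow> real) set" where
  "dom_P n P = {p + r | p r. p \<in> P \<and> (\<forall>e \<in> E n. r e \<ge> 0) \<and> (\<forall>e. e \<notin> E n \<longrightarrow> r e = 0)}"

definition polyhedron_in :: "nat \<Rightarrow> (nat \<Rightarrow> real) set \<Rightarrow> bool" where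
  "polyhedron_in d Q \<longleftrightarrow>
     (\<exists>k a b. Q = {y. (\<forall>i\<ge>d. y i = 0) \<and>
                      (\<forall>j<k. (\<Sum>i<d. (a :: nat \<Rightarrow> nat \<Rightarrow> real) j i * y i) \<le> (b j :: real))})"

definition is_facet :: "(nat \<Rightarrow> real) set \<Rightarrow> (nat \<Rightarrow> real) set \<Rightarrow> bool" where
  "is_facet F Q \<longleftrightarrow> F face_of Q \<and> F \<noteq> {} \<and> F \<noteq> Q \<and>
     (\<forall>G. G face_of Q \<and> G \<noteq> Q \<and> F \<subseteq> G \<longrightarrow> G = F)"

definition num_facets :: "(nat \<Rightarrow> real) set \<Rightarrow> nat" where
  "num_facets Q = card {F. is_facet F Q}"

definition lin_map :: "'e set \<Rightarrow> nat \<Rightarrow> ('e \<Rightarrow> nat \<Rightarrow> real) \<Rightarrow> (nat \<Rightarrow> real) \<Rightarrow> ('e \<Rightarrow> real)" where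
  "lin_map I d M y = (\<lambda>e. if e \<in> I then (\<Sum>i<d. M e i * y i) else 0)"

definition xc :: "'e set \<Rightarrow> ('e \<Rightarrow> real) set \<Rightarrow> nat" where
  "xc I P = (LEAST k. \<exists>d Q M. polyhedron_in d Q \<and> P = lin_map I d M ` Q \<and> num_facets Q = k)"

end

(*
  The dominant of the T-cut polytope is the projection onto the variables x of the system
    lambda_A >= 0,  sum_A lambda_A = 1,
    pi_A(a) = 0 (a in A),  pi_A(b) >= lambda_A (b in T - A),
    z_A(uv) >= |pi_A(u) - pi_A(v)|,  x_uv >= sum_A z_A(uv),
  where A ranges over the odd subsets of T.  A T-cut delta(S) lifts with the single block
  A = S \<inter> T active and pi_A the indicator of the complement of S.  Conversely, for each block
  with lambda_A > 0 the potential pi_A / lambda_A, clamped to [0, 1], vanishes on A and is 1 on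
  T - A, so the average of the T-cuts delta({v. c v <= s}) over the levels s in [0, 1) is bounded
  edgewise by |pi_A(u) - pi_A(v)| / lambda_A.  The system has O(2^|T| n^2) inequalities, and a
  polyhedron has at most as many facets as defining inequalities.
*)

theory Submission
  imports Defs "HOL-Library.Nat_Bijection"
begin

lemma scaleR_fun_apply [simp]: "(c *\<^sub>R f) x = c *\<^sub>R f x"
  by (simp add: scaleR_fun_def)

lemma sum_fun_apply: "(\<Sum>j\<in>J. (f j :: 'a \<Rightarrow> 'b::comm_monoid_add)) x = (\<Sum>j\<in>J. f j x)"
  by (induction J rule: infinite_finite_induct) (auto simp: zero_fun_def plus_fun_def)

section \<open>Polyhedra given by finite systems of inequalities\<close>

definition lin_form :: "nat \<Rightarrow> (nat \<Rightarrow> real) \<Rightarrow> (nat \<Rightarrow> real) \<Rightarrow> real" where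
  "lin_form d a y = (\<Sum>i<d. a i * y i)"

definition satisfies :: "nat \<Rightarrow> ((nat \<Rightarrow> real) \<times> real) set \<Rightarrow> (nat \<Rightarrow> real) \<Rightarrow> bool" where
  "satisfies d CS y \<longleftrightarrow> (\<forall>(a, b)\<in>CS. lin_form d a y \<le> b)"

definition ineq_polyhedron :: "nat \<Rightarrow> ((nat \<Rightarrow> real) \<times> real) set \<Rightarrow> (nat \<Rightarrow> real) set" where
  "ineq_polyhedron d CS = {y. (\<forall>i\<ge>d. y i = 0) \<and> satisfies d CS y}"

lemma lin_form_combination:
  "lin_form d a (u *\<^sub>R y + v *\<^sub>R z) = u * lin_form d a y + v * lin_form d a z"
  by (simp add: lin_form_def algebra_simps sum.distrib sum_distrib_left)

lemma lin_form_diff: "lin_form d (a - b) y = lin_form d a y - lin_form d b y"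
  by (simp add: lin_form_def algebra_simps sum_subtractf)

lemma lin_form_uminus: "lin_form d (- a) y = - lin_form d a y"
  by (simp add: lin_form_def sum_negf)

lemma lin_form_sum: "lin_form d (\<Sum>j\<in>J. a j) y = (\<Sum>j\<in>J. lin_form d (a j) y)"
  unfolding lin_form_def sum_fun_apply by (simp add: sum_distrib_right sum.swap[of _ J])

lemma satisfies_Un: "satisfies d (CS \<union> CS') y \<longleftrightarrow> satisfies d CS y \<and> satisfies d CS' y"
  by (auto simp: satisfies_def)

lemma satisfiesD: "satisfies d CS y \<Longrightarrow> (a, b) \<in> CS \<Longrightarrow> lin_form d a y \<le> b"
  by (auto simp: satisfies_def)

lemma mem_ineq_polyhedron_le:
  "y \<in> ineq_polyhedron d CS \<Longrightarrow> (a, b) \<in> CS \<Longrightarrow> lin_form d a y \<le> b"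
  by (auto simp: ineq_polyhedron_def satisfies_def)

lemma convex_ineq_polyhedron: "convex (ineq_polyhedron d CS)"
  unfolding convex_def
proof (intro ballI allI impI)
  fix x y and u v :: real
  assume x: "x \<in> ineq_polyhedron d CS" and y: "y \<in> ineq_polyhedron d CS"
    and uv: "0 \<le> u" "0 \<le> v" "u + v = 1"
  have "lin_form d a (u *\<^sub>R x + v *\<^sub>R y) \<le> b" if "(a, b) \<in> CS" for a b
  proof -
    have "u * lin_form d a x + v * lin_form d a y \<le> u * b + v * b"
      using uv mem_ineq_polyhedron_le[OF x that] mem_ineq_polyhedron_le[OF y that]
      by (intro add_mono mult_left_mono) auto
    then show ?thesis using uv by (simp add: lin_form_combination flip: distrib_right)
  qed
  then show "u *\<^sub>R x + v *\<^sub>R y \<in> ineq_polyhedron d CS"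
    using x y by (auto simp: ineq_polyhedron_def satisfies_def)
qed

lemma face_of_ineq_polyhedron_tight:
  assumes "(a, b) \<in> CS"
  shows "(ineq_polyhedron d CS \<inter> {y. lin_form d a y = b}) face_of ineq_polyhedron d CS"
  unfolding face_of_def
proof (intro conjI ballI impI)
  show "convex (ineq_polyhedron d CS \<inter> {y. lin_form d a y = b})"
    by (intro convex_Int convex_ineq_polyhedron)
      (auto simp: convex_def lin_form_combination simp flip: distrib_right)
next
  fix p r x
  assume p: "p \<in> ineq_polyhedron d CS" and r: "r \<in> ineq_polyhedron d CS"
    and x: "x \<in> ineq_polyhedron d CS \<inter> {y. lin_form d a y = b}" and seg: "x \<in> open_segment p r"
  obtain u where u: "0 < u" "u < 1" "x = (1 - u) *\<^sub>R p + u *\<^sub>R r"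
    using seg by (auto simp: in_segment)
  have "(1 - u) * lin_form d a p + u * lin_form d a r = b"
    using x u by (simp add: lin_form_combination)
  then have "(1 - u) * (b - lin_form d a p) + u * (b - lin_form d a r) = 0"
    by (simp add: algebra_simps)
  moreover have "(1 - u) * (b - lin_form d a p) \<ge> 0" "u * (b - lin_form d a r) \<ge> 0"
    using u p r assms by (simp_all add: mem_ineq_polyhedron_le)
  ultimately have "(1 - u) * (b - lin_form d a p) = 0 \<and> u * (b - lin_form d a r) = 0"
    by linarith
  then have "lin_form d a p = b \<and> lin_form d a r = b"
    using u by simp
  then show "p \<in> ineq_polyhedron d CS \<inter> {y. lin_form d a y = b}"
    "r \<in> ineq_polyhedron d CS \<inter> {y. lin_form d a y = b}"
    using p r by auto
qed auto

lemma convex_strictly_feasible_point: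
  assumes F: "convex F" "F \<noteq> {}" and fin: "finite K"
    and wit: "\<And>c. c \<in> K \<Longrightarrow> \<exists>w\<in>F. lin_form d (fst c) w < snd c"
    and le: "\<And>w c. w \<in> F \<Longrightarrow> c \<in> K \<Longrightarrow> lin_form d (fst c) w \<le> snd c"
  shows "\<exists>y\<in>F. \<forall>c\<in>K. lin_form d (fst c) y < snd c"
  using fin wit le
proof (induction K rule: finite_induct)
  case empty
  then show ?case using F by auto
next
  case (insert c K)
  then obtain y where y: "y \<in> F" "\<forall>c\<in>K. lin_form d (fst c) y < snd c"
    by auto
  obtain w where w: "w \<in> F" "lin_form d (fst c) w < snd c"
    using insert.prems(1)[of c] by auto
  let ?z = "(1/2) *\<^sub>R y + (1/2) *\<^sub>R w"
  have "?z \<in> F" using F(1) y w unfolding convex_def by auto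
  moreover have "lin_form d (fst c') ?z < snd c'" if c': "c' \<in> insert c K" for c'
  proof -
    have "lin_form d (fst c') y \<le> snd c'" "lin_form d (fst c') w \<le> snd c'"
      using insert.prems(2) y w c' by auto
    moreover have "lin_form d (fst c') y < snd c' \<or> lin_form d (fst c') w < snd c'"
      using c' y w by auto
    ultimately show ?thesis by (simp add: lin_form_combination) linarith
  qed
  ultimately show ?case by blast
qed

text \<open>At a point where every constraint is strict or tight on the whole polyhedron, the segment
  from any other point of the polyhedron can be extended a little beyond it; hence every face
  containing such a point is the whole polyhedron.\<close>

lemma ineq_polyhedron_extend_segment:
  assumes fin: "finite CS" and Q: "ys \<in> ineq_polyhedron d CS" "q \<in> ineq_polyhedron d CS"
    and strict_or_tight: "\<And>c. c \<in> CS \<Longrightarrow>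
      lin_form d (fst c) ys < snd c \<or> (\<forall>y\<in>ineq_polyhedron d CS. lin_form d (fst c) y = snd c)"
  obtains eps where "eps > 0" "(1 + eps) *\<^sub>R ys + (- eps) *\<^sub>R q \<in> ineq_polyhedron d CS"
proof -
  define K where "K = {c \<in> CS. lin_form d (fst c) ys < snd c}"
  define m where
    "m c = (snd c - lin_form d (fst c) ys) / (\<bar>lin_form d (fst c) ys - lin_form d (fst c) q\<bar> + 1)"
    for c
  define eps where "eps = Min (insert 1 (m ` K))"
  have finK: "finite K" using fin by (simp add: K_def)
  have eps_pos: "eps > 0"
    unfolding eps_def using finK by (auto simp: m_def K_def)
  have eps_le: "eps \<le> m c" if "c \<in> K" for c
    unfolding eps_def using finK that by auto
  define w where "w = (1 + eps) *\<^sub>R ys + (- eps) *\<^sub>R q"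
  have "lin_form d (fst c) w \<le> snd c" if c: "c \<in> CS" for c
  proof -
    let ?D = "\<bar>lin_form d (fst c) ys - lin_form d (fst c) q\<bar> + 1"
    have lw: "lin_form d (fst c) w
        = lin_form d (fst c) ys + eps * (lin_form d (fst c) ys - lin_form d (fst c) q)"
      unfolding w_def lin_form_combination by (simp add: algebra_simps)
    show ?thesis
    proof (cases "c \<in> K")
      case True
      have "eps * (lin_form d (fst c) ys - lin_form d (fst c) q) \<le> eps * ?D"
        using eps_pos by (intro mult_left_mono) auto
      also have "\<dots> \<le> m c * ?D"
        using eps_le[OF True] by (intro mult_right_mono) auto
      also have "\<dots> = snd c - lin_form d (fst c) ys"
        unfolding m_def by (simp add: add_pos_nonneg)
      finally show ?thesis using lw by simp
    next
      case False
      then show ?thesis using lw strict_or_tight[OF c] Q by (simp add: K_def c)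
    qed
  qed
  then have "w \<in> ineq_polyhedron d CS"
    using Q by (auto simp: ineq_polyhedron_def satisfies_def w_def)
  with eps_pos that show ?thesis unfolding w_def by blast
qed

lemma face_of_ineq_polyhedron_eq:
  assumes fin: "finite CS" and F: "F face_of ineq_polyhedron d CS" and ys: "ys \<in> F"
    and strict_or_tight: "\<And>c. c \<in> CS \<Longrightarrow>
      lin_form d (fst c) ys < snd c \<or> (\<forall>y\<in>ineq_polyhedron d CS. lin_form d (fst c) y = snd c)"
  shows "F = ineq_polyhedron d CS"
proof
  show "F \<subseteq> ineq_polyhedron d CS" using F by (rule face_of_imp_subset)
  show "ineq_polyhedron d CS \<subseteq> F"
  proof
    fix q assume q: "q \<in> ineq_polyhedron d CS"
    have ysQ: "ys \<in> ineq_polyhedron d CS" using F ys face_of_imp_subset by blast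
    show "q \<in> F"
    proof (cases "q = ys")
      case False
      obtain eps where eps: "eps > 0" and
        w: "(1 + eps) *\<^sub>R ys + (- eps) *\<^sub>R q \<in> ineq_polyhedron d CS"
        using ineq_polyhedron_extend_segment[OF fin ysQ q strict_or_tight] by blast
      let ?w = "(1 + eps) *\<^sub>R ys + (- eps) *\<^sub>R q"
      define u where "u = 1 / (1 + eps)"
      have u: "u * (1 + eps) = 1" "0 < u" "u < 1"
        using eps by (auto simp: u_def)
      have "(1 - u) * q x + u * ((1 + eps) * ys x + - eps * q x)
          = q x * (1 - u * (1 + eps)) + u * (1 + eps) * ys x" for x
        by (simp add: algebra_simps)
      then have "ys = (1 - u) *\<^sub>R q + u *\<^sub>R ?w"
        by (simp add: fun_eq_iff u(1))
      moreover have "q \<noteq> ?w"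
      proof
        assume "q = ?w"
        then have "(1 + eps) *\<^sub>R q = (1 + eps) *\<^sub>R ys" by (simp add: algebra_simps)
        with eps False show False by simp
      qed
      ultimately have "ys \<in> open_segment q ?w" using u unfolding in_segment by blast
      then show ?thesis using F q w ys unfolding face_of_def by blast
    qed (use ys in simp)
  qed
qed

lemma facet_of_ineq_polyhedron:
  assumes fin: "finite CS" and facet: "is_facet F (ineq_polyhedron d CS)"
  shows "\<exists>c\<in>CS. F = ineq_polyhedron d CS \<inter> {y. lin_form d (fst c) y = snd c}"
proof (rule ccontr)
  let ?Q = "ineq_polyhedron d CS"
  assume no_tight: "\<not> ?thesis"
  have F: "F face_of ?Q" "F \<noteq> {}" "F \<noteq> ?Q"
    and maximal: "\<And>G. G face_of ?Q \<Longrightarrow> G \<noteq> ?Q \<Longrightarrow> F \<subseteq> G \<Longrightarrow> G = F"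
    using facet unfolding is_facet_def by auto
  have FQ: "F \<subseteq> ?Q" using F(1) by (rule face_of_imp_subset)
  have tight_on_Q: "\<forall>y\<in>?Q. lin_form d (fst c) y = snd c"
    if c: "c \<in> CS" and "\<forall>y\<in>F. lin_form d (fst c) y = snd c" for c
  proof (rule ccontr)
    let ?G = "?Q \<inter> {y. lin_form d (fst c) y = snd c}"
    assume "\<not> ?thesis"
    then have "?G \<noteq> ?Q" by auto
    moreover have "?G face_of ?Q"
      using face_of_ineq_polyhedron_tight[of "fst c" "snd c"] c by simp
    moreover have "F \<subseteq> ?G" using FQ that(2) by auto
    ultimately have "?G = F" using maximal by blast
    with no_tight c show False by blast
  qed
  define K where "K = {c \<in> CS. \<not> (\<forall>y\<in>F. lin_form d (fst c) y = snd c)}"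
  have le: "lin_form d (fst c) w \<le> snd c" if "w \<in> F" "c \<in> CS" for w c
    using that FQ mem_ineq_polyhedron_le[of w d CS "fst c" "snd c"] by auto
  have witness: "\<exists>w\<in>F. lin_form d (fst c) w < snd c" if "c \<in> K" for c
  proof -
    obtain w where "w \<in> F" "lin_form d (fst c) w \<noteq> snd c"
      using \<open>c \<in> K\<close> by (auto simp: K_def)
    moreover have "lin_form d (fst c) w \<le> snd c" using le \<open>w \<in> F\<close> \<open>c \<in> K\<close> by (simp add: K_def)
    ultimately show ?thesis by force
  qed
  have finK: "finite K" using fin by (simp add: K_def)
  have "\<exists>ys\<in>F. \<forall>c\<in>K. lin_form d (fst c) ys < snd c"
    by (rule convex_strictly_feasible_point[OF face_of_imp_convex[OF F(1)] F(2) finK witness])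
      (use le in \<open>auto simp: K_def\<close>)
  then obtain ys where ys: "ys \<in> F" "\<forall>c\<in>K. lin_form d (fst c) ys < snd c"
    by blast
  have "lin_form d (fst c) ys < snd c \<or> (\<forall>y\<in>?Q. lin_form d (fst c) y = snd c)"
    if "c \<in> CS" for c
    using ys(2) tight_on_Q[OF that] that unfolding K_def by blast
  then have "F = ?Q"
    by (rule face_of_ineq_polyhedron_eq[OF fin F(1) ys(1)])
  with F(3) show False ..
qed

lemma num_facets_ineq_polyhedron_le:
  assumes fin: "finite CS"
  shows "num_facets (ineq_polyhedron d CS) \<le> card CS"
proof -
  let ?tight = "\<lambda>c. ineq_polyhedron d CS \<inter> {y. lin_form d (fst c) y = snd c}"
  have "{F. is_facet F (ineq_polyhedron d CS)} \<subseteq> ?tight ` CS"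
    using facet_of_ineq_polyhedron[OF fin] by blast
  then have "num_facets (ineq_polyhedron d CS) \<le> card (?tight ` CS)"
    unfolding num_facets_def using fin by (intro card_mono) auto
  also have "\<dots> \<le> card CS" using fin by (rule card_image_le)
  finally show ?thesis .
qed

lemma polyhedron_in_ineq_polyhedron:
  assumes fin: "finite CS"
  shows "polyhedron_in d (ineq_polyhedron d CS)"
proof -
  obtain h where h: "bij_betw h {..<card CS} CS"
    using ex_bij_betw_nat_finite[OF fin] by (auto simp: atLeast0LessThan)
  have "satisfies d CS y \<longleftrightarrow> (\<forall>j<card CS. lin_form d (fst (h j)) y \<le> snd (h j))" for y
  proof -
    have "satisfies d CS y \<longleftrightarrow> (\<forall>c\<in>h ` {..<card CS}. lin_form d (fst c) y \<le> snd c)"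
      unfolding satisfies_def bij_betw_imp_surj_on[OF h] by (simp add: case_prod_beta)
    then show ?thesis by (simp add: lessThan_def)
  qed
  then have "ineq_polyhedron d CS = {y. (\<forall>i\<ge>d. y i = 0) \<and>
      (\<forall>j<card CS. (\<Sum>i<d. fst (h j) i * y i) \<le> snd (h j))}"
    unfolding ineq_polyhedron_def lin_form_def by simp
  then show ?thesis
    unfolding polyhedron_in_def by (intro exI)
qed

lemma xc_le_card_constraints:
  assumes "finite CS" and "P = lin_map I d M ` ineq_polyhedron d CS"
  shows "xc I P \<le> card CS"
proof -
  have "\<exists>d' Q M'. polyhedron_in d' Q \<and> P = lin_map I d' M' ` Q
      \<and> num_facets Q = num_facets (ineq_polyhedron d CS)"
    using assms(2) polyhedron_in_ineq_polyhedron[OF assms(1)] by (intro exI conjI) auto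
  then have "xc I P \<le> num_facets (ineq_polyhedron d CS)"
    unfolding xc_def by (rule Least_le)
  also have "\<dots> \<le> card CS" using assms(1) by (rule num_facets_ineq_polyhedron_le)
  finally show ?thesis .
qed

section \<open>Cuts of the complete graph\<close>

lemma E_pair: "u < n \<Longrightarrow> v < n \<Longrightarrow> u \<noteq> v \<Longrightarrow> {u, v} \<in> E n"
  unfolding E_def V_def by blast

lemma E_cases:
  assumes "e \<in> E n"
  obtains u v where "u < v" "v < n" "e = {u, v}"
proof -
  obtain u v where uv: "u < n" "v < n" "u \<noteq> v" "e = {u, v}"
    using assms unfolding E_def V_def by blast
  show ?thesis
  proof (cases "u < v")
    case True
    with uv that show ?thesis by blast
  next
    case False
    with uv that[of v u] show ?thesis by (simp add: insert_commute)
  qed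
qed

lemma chi_delta_pair:
  assumes "u < n" "v < n" "u \<noteq> v"
  shows "chi (delta n S) {u, v} = (if u \<in> S \<longleftrightarrow> v \<notin> S then 1 else 0)"
  using E_pair[OF assms] unfolding chi_def delta_def by (auto simp: doubleton_eq_iff)

lemma P_Tcut_vanishes: "p \<in> P_Tcut n T \<Longrightarrow> e \<notin> E n \<Longrightarrow> p e = 0"
proof -
  assume p: "p \<in> P_Tcut n T" and e: "e \<notin> E n"
  have "P_Tcut n T \<subseteq> {f. \<forall>e. e \<notin> E n \<longrightarrow> f e = 0}"
    unfolding P_Tcut_def
  proof (rule hull_minimal)
    show "chi ` T_cuts n T \<subseteq> {f. \<forall>e. e \<notin> E n \<longrightarrow> f e = 0}"
      unfolding T_cuts_def chi_def delta_def by auto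
    show "convex {f. \<forall>e. e \<notin> E n \<longrightarrow> f (e::nat set) = (0::real)}"
      unfolding convex_def by auto
  qed
  with p e show ?thesis by auto
qed

definition cut_bounded :: "nat \<Rightarrow> nat set \<Rightarrow> (nat \<Rightarrow> real) \<Rightarrow> bool" where
  "cut_bounded n T c \<longleftrightarrow>
     (\<exists>p\<in>P_Tcut n T. \<forall>u v. u < n \<longrightarrow> v < n \<longrightarrow> u \<noteq> v \<longrightarrow> p {u, v} \<le> \<bar>c u - c v\<bar>)"

definition fractional_values :: "nat \<Rightarrow> (nat \<Rightarrow> real) \<Rightarrow> real set" where
  "fractional_values n c = c ` {..<n} \<inter> {0<..<1}"

lemma cut_bounded_01:
  assumes "A \<subseteq> T" "T \<subseteq> V n" "odd (card A)"
    and vals: "\<forall>v<n. c v = 0 \<or> c v = 1" and "\<forall>a\<in>A. c a = 0" "\<forall>b\<in>T - A. c b = 1"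
  shows "cut_bounded n T c"
proof -
  define S where "S = {v. v < n \<and> c v = 0}"
  have "S \<subseteq> V n" by (auto simp: S_def V_def)
  moreover have "S \<inter> T = A"
    using assms(1,2,5,6) by (force simp: S_def V_def)
  ultimately have "chi (delta n S) \<in> P_Tcut n T"
    using assms(3) unfolding P_Tcut_def T_cuts_def by (auto intro: hull_inc)
  moreover have "chi (delta n S) {u, v} \<le> \<bar>c u - c v\<bar>" if "u < n" "v < n" "u \<noteq> v" for u v
    using chi_delta_pair[OF that, of S] vals that by (auto simp: S_def)
  ultimately show ?thesis unfolding cut_bounded_def by blast
qed

lemma cut_bounded_combination:
  assumes "cut_bounded n T c1" "cut_bounded n T c2" "0 \<le> al" "al \<le> 1"
    and comb: "\<And>u v. u < n \<Longrightarrow> v < n \<Longrightarrow>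
      \<bar>c u - c v\<bar> = al * \<bar>c1 u - c1 v\<bar> + (1 - al) * \<bar>c2 u - c2 v\<bar>"
  shows "cut_bounded n T c"
proof -
  obtain p1 p2 where p: "p1 \<in> P_Tcut n T" "p2 \<in> P_Tcut n T"
    and le: "\<And>u v. u < n \<Longrightarrow> v < n \<Longrightarrow> u \<noteq> v \<Longrightarrow> p1 {u, v} \<le> \<bar>c1 u - c1 v\<bar>"
      "\<And>u v. u < n \<Longrightarrow> v < n \<Longrightarrow> u \<noteq> v \<Longrightarrow> p2 {u, v} \<le> \<bar>c2 u - c2 v\<bar>"
    using assms(1,2) unfolding cut_bounded_def by metis
  have "al *\<^sub>R p1 + (1 - al) *\<^sub>R p2 \<in> P_Tcut n T"
    using p assms(3,4) convex_convex_hull[of "chi ` T_cuts n T"]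
    unfolding P_Tcut_def convex_def by simp
  moreover have "(al *\<^sub>R p1 + (1 - al) *\<^sub>R p2) {u, v} \<le> \<bar>c u - c v\<bar>"
    if "u < n" "v < n" "u \<noteq> v" for u v
  proof -
    have "(al *\<^sub>R p1 + (1 - al) *\<^sub>R p2) {u, v} = al * p1 {u, v} + (1 - al) * p2 {u, v}"
      by simp
    also have "\<dots> \<le> al * \<bar>c1 u - c1 v\<bar> + (1 - al) * \<bar>c2 u - c2 v\<bar>"
      using le[OF that] assms(3,4) by (intro add_mono mult_left_mono) auto
    finally show ?thesis using comb that by simp
  qed
  ultimately show ?thesis unfolding cut_bounded_def by blast
qed

text \<open>The induction step of the level-set argument: replacing the smallest fractional value \<open>t\<close> of
  a potential by \<open>0\<close> and by the next larger value \<open>t2\<close> writes \<open>\<bar>c u - c v\<bar>\<close> as a convex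
  combination, with weights \<open>(t2 - t) / t2\<close> and \<open>t / t2\<close>, of the same quantities for two potentials
  with fewer fractional values.\<close>

lemma abs_diff_merge_level:
  fixes t t2 al x y :: real
  assumes t: "0 < t" "t < t2" and al: "(1 - al) * t2 = t"
    and x: "x = 0 \<or> x = t \<or> x \<ge> t2" and y: "y = 0 \<or> y = t \<or> y \<ge> t2"
  shows "\<bar>x - y\<bar> = al * \<bar>(if x = t then 0 else x) - (if y = t then 0 else y)\<bar>
     + (1 - al) * \<bar>(if x = t then t2 else x) - (if y = t then t2 else y)\<bar>"
proof -
  have al_le: "al \<le> 1" using t al by (smt (verit) mult_nonpos_nonneg)
  have split_t: "\<bar>t - z\<bar> = al * \<bar>0 - z\<bar> + (1 - al) * \<bar>t2 - z\<bar>" if "z = 0 \<or> z \<ge> t2" for z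
    using that t al al_le by (auto simp: abs_if algebra_simps)
  show ?thesis
    using split_t[of x] split_t[of y] x y by (auto simp: abs_minus_commute algebra_simps)
qed

lemma fractional_values_merge:
  assumes range: "\<forall>v<n. 0 \<le> c v \<and> c v \<le> 1" and frac: "fractional_values n c \<noteq> {}"
  obtains c1 c2 al where "0 \<le> al" "al \<le> 1"
    "card (fractional_values n c1) < card (fractional_values n c)"
    "card (fractional_values n c2) < card (fractional_values n c)"
    "\<forall>v<n. 0 \<le> c1 v \<and> c1 v \<le> 1" "\<forall>v<n. 0 \<le> c2 v \<and> c2 v \<le> 1"
    "\<forall>v. c v \<in> {0, 1} \<longrightarrow> c1 v = c v \<and> c2 v = c v"
    "\<forall>u<n. \<forall>v<n. \<bar>c u - c v\<bar> = al * \<bar>c1 u - c1 v\<bar> + (1 - al) * \<bar>c2 u - c2 v\<bar>"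
proof -
  have fin: "finite (fractional_values n c)" by (simp add: fractional_values_def)
  define t where "t = Min (fractional_values n c)"
  have t: "t \<in> fractional_values n c" "\<And>x. x \<in> fractional_values n c \<Longrightarrow> t \<le> x"
    using fin frac by (simp_all add: t_def)
  then have t01: "0 < t" "t < 1" by (auto simp: fractional_values_def)
  define above where "above = insert 1 (c ` {..<n}) \<inter> {t<..}"
  define t2 where "t2 = Min above"
  have above: "finite above" "1 \<in> above" using t01 by (auto simp: above_def)
  then have t2: "t < t2" "t2 \<le> 1" "t2 \<in> insert 1 (c ` {..<n})"
    "\<And>x. x \<in> above \<Longrightarrow> t2 \<le> x"
    using Min_in[of above] by (auto simp: t2_def above_def)
  have levels: "c v = 0 \<or> c v = t \<or> c v \<ge> t2" if "v < n" for v
  proof -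
    have "c v > t \<Longrightarrow> c v \<in> above" using that by (simp add: above_def)
    moreover have "0 < c v \<Longrightarrow> c v < t \<Longrightarrow> False"
      using t(2)[of "c v"] that t01 by (auto simp: fractional_values_def)
    ultimately show ?thesis using t2(4) range that by force
  qed
  define al where "al = (t2 - t) / t2"
  define c1 where "c1 v = (if c v = t then 0 else c v)" for v
  define c2 where "c2 v = (if c v = t then t2 else c v)" for v
  have al: "(1 - al) * t2 = t" "0 \<le> al" "al \<le> 1"
    using t01 t2 by (auto simp: al_def field_simps)
  have "fractional_values n c1 \<subseteq> fractional_values n c - {t}"
    by (auto simp: fractional_values_def c1_def)
  moreover have "fractional_values n c2 \<subseteq> fractional_values n c - {t}"
    using t2(1-3) by (auto simp: fractional_values_def c2_def)
  ultimately have "card (fractional_values n c1) < card (fractional_values n c)"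
    "card (fractional_values n c2) < card (fractional_values n c)"
    using fin t(1) by (meson card_Diff1_less card_mono finite_Diff le_less_trans)+
  moreover have "\<forall>v<n. 0 \<le> c1 v \<and> c1 v \<le> 1" "\<forall>v<n. 0 \<le> c2 v \<and> c2 v \<le> 1"
    "\<forall>v. c v \<in> {0, 1} \<longrightarrow> c1 v = c v \<and> c2 v = c v"
    using range t01 t2 by (auto simp: c1_def c2_def)
  moreover have "\<forall>u<n. \<forall>v<n. \<bar>c u - c v\<bar> = al * \<bar>c1 u - c1 v\<bar> + (1 - al) * \<bar>c2 u - c2 v\<bar>"
    unfolding c1_def c2_def
    using abs_diff_merge_level[OF t01(1) t2(1) al(1)] levels by blast
  ultimately show ?thesis using that al(2,3) by blast
qed

lemma cut_bounded_potential:
  assumes AT: "A \<subseteq> T" "T \<subseteq> V n" "odd (card A)"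
    and "\<forall>v<n. 0 \<le> c v \<and> c v \<le> 1" "\<forall>a\<in>A. c a = 0" "\<forall>b\<in>T - A. c b = 1"
  shows "cut_bounded n T c"
  using assms(4-)
proof (induction "card (fractional_values n c)" arbitrary: c rule: less_induct)
  case less
  show ?case
  proof (cases "fractional_values n c = {}")
    case True
    have "c v = 0 \<or> c v = 1" if "v < n" for v
    proof -
      have "c v \<notin> {0<..<1}" using True that by (auto simp: fractional_values_def)
      then show ?thesis using less.prems(1) that by fastforce
    qed
    then show ?thesis using cut_bounded_01[OF AT] less.prems(2,3) by blast
  next
    case False
    obtain c1 c2 al where al: "0 \<le> al" "al \<le> 1"
      and fewer: "card (fractional_values n c1) < card (fractional_values n c)"
        "card (fractional_values n c2) < card (fractional_values n c)"
      and range: "\<forall>v<n. 0 \<le> c1 v \<and> c1 v \<le> 1" "\<forall>v<n. 0 \<le> c2 v \<and> c2 v \<le> 1"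
      and keep: "\<forall>v. c v \<in> {0, 1} \<longrightarrow> c1 v = c v \<and> c2 v = c v"
      and comb: "\<forall>u<n. \<forall>v<n. \<bar>c u - c v\<bar> = al * \<bar>c1 u - c1 v\<bar> + (1 - al) * \<bar>c2 u - c2 v\<bar>"
      by (rule fractional_values_merge[OF less.prems(1) False])
    have "\<forall>a\<in>A. c1 a = 0 \<and> c2 a = 0" "\<forall>b\<in>T - A. c1 b = 1 \<and> c2 b = 1"
      using less.prems(2,3) keep by simp_all
    then have "cut_bounded n T c1" "cut_bounded n T c2"
      using less.hyps[OF fewer(1) range(1)] less.hyps[OF fewer(2) range(2)] by simp_all
    then show ?thesis
      by (rule cut_bounded_combination[OF _ _ al]) (use comb in simp)
  qed
qed

section \<open>The extended formulation\<close>

text \<open>Variables \<open>x\<^sub>u\<^sub>v\<close>, \<open>\<lambda>\<^sub>A\<close>, \<open>\<pi>\<^sub>A(v)\<close> and \<open>z\<^sub>A(uv)\<close> (for edges \<open>u < v\<close> and odd \<open>A \<subseteq> T\<close>) are packed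
  injectively into the coordinates of \<open>\<real>\<^sup>d\<close>; the first component of the code is the variable kind.\<close>

definition coord :: "nat \<Rightarrow> nat \<Rightarrow> nat \<Rightarrow> nat" where
  "coord k a b = prod_encode (k, prod_encode (a, b))"

definition x_var :: "nat \<Rightarrow> nat \<Rightarrow> nat" where "x_var u v = coord 0 u v"
definition lambda_var :: "nat set \<Rightarrow> nat" where "lambda_var A = coord 1 (set_encode A) 0"
definition pi_var :: "nat set \<Rightarrow> nat \<Rightarrow> nat" where "pi_var A v = coord 2 (set_encode A) v"
definition z_var :: "nat set \<Rightarrow> nat \<Rightarrow> nat \<Rightarrow> nat" where
  "z_var A u v = coord 3 (set_encode A) (prod_encode (u, v))"

definition odd_subsets :: "nat set \<Rightarrow> nat set set" where
  "odd_subsets T = {A. A \<subseteq> T \<and> odd (card A)}"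

definition edge_pairs :: "nat \<Rightarrow> (nat \<times> nat) set" where
  "edge_pairs n = {(u, v). u < v \<and> v < n}"

lemma finite_edge_pairs: "finite (edge_pairs n)"
  by (rule finite_subset[of _ "{..<n} \<times> {..<n}"]) (auto simp: edge_pairs_def)

lemma card_edge_pairs_le: "card (edge_pairs n) \<le> n * n"
proof -
  have "card (edge_pairs n) \<le> card ({..<n} \<times> {..<n})"
    by (rule card_mono) (auto simp: edge_pairs_def)
  then show ?thesis by (simp add: card_cartesian_product)
qed

lemma finite_odd_subsets: "finite T \<Longrightarrow> finite (odd_subsets T)"
  unfolding odd_subsets_def by (rule finite_subset[of _ "Pow T"]) auto

lemma card_odd_subsets_le: "finite T \<Longrightarrow> card (odd_subsets T) \<le> 2 ^ card T"
  using card_mono[of "Pow T" "odd_subsets T"] by (auto simp: odd_subsets_def card_Pow)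

definition ext_coords :: "nat \<Rightarrow> nat set \<Rightarrow> nat set" where
  "ext_coords n T = (\<lambda>(u, v). x_var u v) ` edge_pairs n \<union> lambda_var ` odd_subsets T
     \<union> (\<lambda>(A, v). pi_var A v) ` (odd_subsets T \<times> {..<n})
     \<union> (\<lambda>(A, (u, v)). z_var A u v) ` (odd_subsets T \<times> edge_pairs n)"

definition ext_dim :: "nat \<Rightarrow> nat set \<Rightarrow> nat" where
  "ext_dim n T = Suc (Max (insert 0 (ext_coords n T)))"

lemma ext_coords_less_dim:
  assumes "finite T" "k \<in> ext_coords n T"
  shows "k < ext_dim n T"
proof -
  have "finite (ext_coords n T)"
    using assms(1) by (simp add: ext_coords_def finite_edge_pairs finite_odd_subsets)
  then show ?thesis using assms(2) by (simp add: ext_dim_def le_imp_less_Suc)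
qed

lemma ext_vars_less_dim:
  assumes "finite T"
  shows "u < v \<Longrightarrow> v < n \<Longrightarrow> x_var u v < ext_dim n T"
    and "A \<in> odd_subsets T \<Longrightarrow> lambda_var A < ext_dim n T"
    and "A \<in> odd_subsets T \<Longrightarrow> v < n \<Longrightarrow> pi_var A v < ext_dim n T"
    and "A \<in> odd_subsets T \<Longrightarrow> u < v \<Longrightarrow> v < n \<Longrightarrow> z_var A u v < ext_dim n T"
  by (intro ext_coords_less_dim[OF assms]; force simp: ext_coords_def edge_pairs_def)+

definition coord_vec :: "nat \<Rightarrow> nat \<Rightarrow> real" where
  "coord_vec k = (\<lambda>i. if i = k then 1 else 0)"

lemma lin_form_coord_vec: "k < d \<Longrightarrow> lin_form d (coord_vec k) y = y k"
proof -
  assume "k < d"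
  have "(\<Sum>i<d. coord_vec k i * y i) = (\<Sum>i<d. if i = k then y k else 0)"
    by (rule sum.cong) (auto simp: coord_vec_def)
  with \<open>k < d\<close> show ?thesis by (simp add: lin_form_def)
qed

definition lambda_nonneg_constraints :: "nat set \<Rightarrow> ((nat \<Rightarrow> real) \<times> real) set" where
  "lambda_nonneg_constraints T = (\<lambda>A. (- coord_vec (lambda_var A), 0)) ` odd_subsets T"

definition lambda_sum_constraints :: "nat set \<Rightarrow> ((nat \<Rightarrow> real) \<times> real) set" where
  "lambda_sum_constraints T =
     {((\<Sum>A\<in>odd_subsets T. coord_vec (lambda_var A)), 1),
      (- (\<Sum>A\<in>odd_subsets T. coord_vec (lambda_var A)), -1)}"

definition pi_zero_constraints :: "nat set \<Rightarrow> ((nat \<Rightarrow> real) \<times> real) set" where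
  "pi_zero_constraints T =
     (\<lambda>(A, a). (coord_vec (pi_var A a), 0)) ` Sigma (odd_subsets T) id
     \<union> (\<lambda>(A, a). (- coord_vec (pi_var A a), 0)) ` Sigma (odd_subsets T) id"

definition pi_lower_constraints :: "nat set \<Rightarrow> ((nat \<Rightarrow> real) \<times> real) set" where
  "pi_lower_constraints T = (\<lambda>(A, b). (coord_vec (lambda_var A) - coord_vec (pi_var A b), 0))
     ` Sigma (odd_subsets T) (\<lambda>A. T - A)"

definition z_abs_constraints :: "nat \<Rightarrow> nat set \<Rightarrow> ((nat \<Rightarrow> real) \<times> real) set" where
  "z_abs_constraints n T =
     (\<lambda>(A, (u, v)). (coord_vec (pi_var A u) - coord_vec (pi_var A v) - coord_vec (z_var A u v), 0))
       ` (odd_subsets T \<times> edge_pairs n)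
     \<union> (\<lambda>(A, (u, v)). (coord_vec (pi_var A v) - coord_vec (pi_var A u) - coord_vec (z_var A u v), 0))
       ` (odd_subsets T \<times> edge_pairs n)"

definition x_sum_constraints :: "nat \<Rightarrow> nat set \<Rightarrow> ((nat \<Rightarrow> real) \<times> real) set" where
  "x_sum_constraints n T = (\<lambda>(u, v).
     ((\<Sum>A\<in>odd_subsets T. coord_vec (z_var A u v)) - coord_vec (x_var u v), 0)) ` edge_pairs n"

definition ext_constraints :: "nat \<Rightarrow> nat set \<Rightarrow> ((nat \<Rightarrow> real) \<times> real) set" where
  "ext_constraints n T = lambda_nonneg_constraints T \<union> lambda_sum_constraints T
     \<union> pi_zero_constraints T \<union> pi_lower_constraints T \<union> z_abs_constraints n T
     \<union> x_sum_constraints n T"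

definition ext_polyhedron :: "nat \<Rightarrow> nat set \<Rightarrow> (nat \<Rightarrow> real) set" where
  "ext_polyhedron n T = ineq_polyhedron (ext_dim n T) (ext_constraints n T)"

definition ext_feasible :: "nat \<Rightarrow> nat set \<Rightarrow> (nat \<Rightarrow> real) \<Rightarrow> bool" where
  "ext_feasible n T y \<longleftrightarrow>
     (\<forall>A\<in>odd_subsets T. y (lambda_var A) \<ge> 0) \<and> (\<Sum>A\<in>odd_subsets T. y (lambda_var A)) = 1 \<and>
     (\<forall>A\<in>odd_subsets T. \<forall>a\<in>A. y (pi_var A a) = 0) \<and>
     (\<forall>A\<in>odd_subsets T. \<forall>b\<in>T - A. y (lambda_var A) \<le> y (pi_var A b)) \<and>
     (\<forall>A\<in>odd_subsets T. \<forall>u v. u < v \<longrightarrow> v < n \<longrightarrow>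
        \<bar>y (pi_var A u) - y (pi_var A v)\<bar> \<le> y (z_var A u v)) \<and>
     (\<forall>u v. u < v \<longrightarrow> v < n \<longrightarrow> (\<Sum>A\<in>odd_subsets T. y (z_var A u v)) \<le> y (x_var u v))"

context
  fixes n :: nat and T :: "nat set"
  assumes T: "T \<subseteq> V n"
begin

private lemma finite_T: "finite T"
  using T finite_subset by (auto simp: V_def)

private lemma odd_subset_less: "A \<in> odd_subsets T \<Longrightarrow> a \<in> T \<Longrightarrow> a < n"
  using T by (auto simp: V_def)

private lemma lin_form_lambda:
  "A \<in> odd_subsets T \<Longrightarrow> lin_form (ext_dim n T) (coord_vec (lambda_var A)) y = y (lambda_var A)"
  by (simp add: lin_form_coord_vec ext_vars_less_dim finite_T)

private lemma lin_form_pi: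
  "A \<in> odd_subsets T \<Longrightarrow> v < n \<Longrightarrow> lin_form (ext_dim n T) (coord_vec (pi_var A v)) y = y (pi_var A v)"
  by (simp add: lin_form_coord_vec ext_vars_less_dim finite_T)

private lemma lin_form_z:
  "A \<in> odd_subsets T \<Longrightarrow> u < v \<Longrightarrow> v < n \<Longrightarrow>
    lin_form (ext_dim n T) (coord_vec (z_var A u v)) y = y (z_var A u v)"
  by (simp add: lin_form_coord_vec ext_vars_less_dim finite_T)

private lemma lin_form_x:
  "u < v \<Longrightarrow> v < n \<Longrightarrow> lin_form (ext_dim n T) (coord_vec (x_var u v)) y = y (x_var u v)"
  by (simp add: lin_form_coord_vec ext_vars_less_dim finite_T)

private lemma satisfies_lambda_nonneg:
  "satisfies (ext_dim n T) (lambda_nonneg_constraints T) y \<longleftrightarrow>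
    (\<forall>A\<in>odd_subsets T. y (lambda_var A) \<ge> 0)"
  by (auto simp: satisfies_def lambda_nonneg_constraints_def lin_form_uminus lin_form_lambda)

private lemma satisfies_lambda_sum:
  "satisfies (ext_dim n T) (lambda_sum_constraints T) y \<longleftrightarrow>
    (\<Sum>A\<in>odd_subsets T. y (lambda_var A)) = 1"
  by (auto simp: satisfies_def lambda_sum_constraints_def lin_form_uminus lin_form_sum lin_form_lambda)

private lemma satisfies_pi_zero:
  "satisfies (ext_dim n T) (pi_zero_constraints T) y \<longleftrightarrow>
    (\<forall>A\<in>odd_subsets T. \<forall>a\<in>A. y (pi_var A a) = 0)"
    (is "?sat \<longleftrightarrow> ?zero")
proof -
  have pi: "lin_form (ext_dim n T) (coord_vec (pi_var A a)) y = y (pi_var A a)"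
    if "A \<in> odd_subsets T" "a \<in> A" for A a
    using that odd_subset_less[of A a] lin_form_pi[of A a y] by (auto simp: odd_subsets_def)
  show ?thesis
  proof
    assume sat: ?sat
    show ?zero
    proof (intro ballI)
      fix A a assume Aa: "A \<in> odd_subsets T" "a \<in> A"
      have "(coord_vec (pi_var A a), 0) \<in> pi_zero_constraints T"
        "(- coord_vec (pi_var A a), 0) \<in> pi_zero_constraints T"
        unfolding pi_zero_constraints_def using Aa by (auto intro!: image_eqI[where x = "(A, a)"])
      then have "lin_form (ext_dim n T) (coord_vec (pi_var A a)) y \<le> 0"
        "lin_form (ext_dim n T) (- coord_vec (pi_var A a)) y \<le> 0"
        using sat satisfiesD by blast+
      with pi[OF Aa] show "y (pi_var A a) = 0" by (simp add: lin_form_uminus)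
    qed
  next
    assume ?zero
    then show ?sat by (auto simp: satisfies_def pi_zero_constraints_def lin_form_uminus pi)
  qed
qed

private lemma satisfies_pi_lower:
  "satisfies (ext_dim n T) (pi_lower_constraints T) y \<longleftrightarrow>
    (\<forall>A\<in>odd_subsets T. \<forall>b\<in>T - A. y (lambda_var A) \<le> y (pi_var A b))"
  using odd_subset_less
  by (auto simp: satisfies_def pi_lower_constraints_def lin_form_diff lin_form_lambda lin_form_pi)

private lemma satisfies_z_abs:
  "satisfies (ext_dim n T) (z_abs_constraints n T) y \<longleftrightarrow>
    (\<forall>A\<in>odd_subsets T. \<forall>u v. u < v \<longrightarrow> v < n \<longrightarrow>
       \<bar>y (pi_var A u) - y (pi_var A v)\<bar> \<le> y (z_var A u v))"
    (is "?sat \<longleftrightarrow> ?abs")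
proof
  assume sat: ?sat
  show ?abs
  proof (intro ballI allI impI)
    fix A u v assume A: "A \<in> odd_subsets T" and uv: "u < v" "v < n"
    have "(coord_vec (pi_var A u) - coord_vec (pi_var A v) - coord_vec (z_var A u v), 0)
        \<in> z_abs_constraints n T"
      "(coord_vec (pi_var A v) - coord_vec (pi_var A u) - coord_vec (z_var A u v), 0)
        \<in> z_abs_constraints n T"
      unfolding z_abs_constraints_def using A uv
      by (auto intro!: image_eqI[where x = "(A, (u, v))"] simp: edge_pairs_def)
    then have "lin_form (ext_dim n T)
        (coord_vec (pi_var A u) - coord_vec (pi_var A v) - coord_vec (z_var A u v)) y \<le> 0"
      "lin_form (ext_dim n T)
        (coord_vec (pi_var A v) - coord_vec (pi_var A u) - coord_vec (z_var A u v)) y \<le> 0"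
      using sat satisfiesD by blast+
    with A uv show "\<bar>y (pi_var A u) - y (pi_var A v)\<bar> \<le> y (z_var A u v)"
      by (simp add: lin_form_diff lin_form_pi lin_form_z abs_le_iff)
  qed
next
  assume ?abs
  then show ?sat
    by (auto simp: satisfies_def z_abs_constraints_def edge_pairs_def lin_form_diff lin_form_pi
        lin_form_z abs_le_iff)
qed

private lemma satisfies_x_sum:
  "satisfies (ext_dim n T) (x_sum_constraints n T) y \<longleftrightarrow>
    (\<forall>u v. u < v \<longrightarrow> v < n \<longrightarrow> (\<Sum>A\<in>odd_subsets T. y (z_var A u v)) \<le> y (x_var u v))"
  by (auto simp: satisfies_def x_sum_constraints_def edge_pairs_def lin_form_diff lin_form_sum
      lin_form_z lin_form_x)

lemma mem_ext_polyhedron_iff: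
  "y \<in> ext_polyhedron n T \<longleftrightarrow> (\<forall>i\<ge>ext_dim n T. y i = 0) \<and> ext_feasible n T y"
  unfolding ext_polyhedron_def ineq_polyhedron_def ext_constraints_def ext_feasible_def
    satisfies_Un satisfies_lambda_nonneg satisfies_lambda_sum satisfies_pi_zero satisfies_pi_lower
    satisfies_z_abs satisfies_x_sum
  by simp

end

definition edge_proj :: "nat set \<Rightarrow> nat \<Rightarrow> real" where
  "edge_proj e = coord_vec (x_var (Min e) (Max e))"

definition ext_proj :: "nat \<Rightarrow> nat set \<Rightarrow> (nat \<Rightarrow> real) \<Rightarrow> nat set \<Rightarrow> real" where
  "ext_proj n T = lin_map (E n) (ext_dim n T) edge_proj"

lemma ext_proj_edge:
  assumes "finite T" "u < v" "v < n"
  shows "ext_proj n T y {u, v} = y (x_var u v)"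
proof -
  have "{u, v} \<in> E n" using assms E_pair by auto
  moreover have "Min {u, v} = u" "Max {u, v} = v" using assms(2) by auto
  ultimately show ?thesis
    using ext_vars_less_dim(1)[OF assms]
    by (simp add: ext_proj_def lin_map_def edge_proj_def lin_form_coord_vec[unfolded lin_form_def])
qed

lemma ext_proj_outside: "e \<notin> E n \<Longrightarrow> ext_proj n T y e = 0"
  by (simp add: ext_proj_def lin_map_def)

lemma ext_proj_combination:
  "ext_proj n T (u *\<^sub>R y + v *\<^sub>R z) = u *\<^sub>R ext_proj n T y + v *\<^sub>R ext_proj n T z"
  unfolding ext_proj_def lin_map_def
  by (auto simp: fun_eq_iff sum.distrib sum_distrib_left algebra_simps)

lemma convex_ext_proj_image: "convex (ext_proj n T ` ext_polyhedron n T)"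
  unfolding convex_def
proof (intro ballI allI impI)
  fix f g and u v :: real
  assume "f \<in> ext_proj n T ` ext_polyhedron n T" "g \<in> ext_proj n T ` ext_polyhedron n T"
    and uv: "0 \<le> u" "0 \<le> v" "u + v = 1"
  then obtain y1 y2 where y: "y1 \<in> ext_polyhedron n T" "y2 \<in> ext_polyhedron n T"
    and fg: "f = ext_proj n T y1" "g = ext_proj n T y2"
    by blast
  have "u *\<^sub>R y1 + v *\<^sub>R y2 \<in> ext_polyhedron n T"
    using convex_ineq_polyhedron y uv unfolding ext_polyhedron_def convex_def by blast
  moreover have "u *\<^sub>R f + v *\<^sub>R g = ext_proj n T (u *\<^sub>R y1 + v *\<^sub>R y2)"
    by (simp add: fg ext_proj_combination)
  ultimately show "u *\<^sub>R f + v *\<^sub>R g \<in> ext_proj n T ` ext_polyhedron n T" by blast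
qed

definition coord_point :: "nat \<Rightarrow> (nat \<Rightarrow> nat \<Rightarrow> nat \<Rightarrow> real) \<Rightarrow> nat \<Rightarrow> real" where
  "coord_point d G i =
     (if i < d then (case prod_decode i of (k, w) \<Rightarrow> case prod_decode w of (a, b) \<Rightarrow> G k a b) else 0)"

lemma coord_point_coord: "coord k a b < d \<Longrightarrow> coord_point d G (coord k a b) = G k a b"
  by (simp add: coord_point_def coord_def)

lemma coord_point_outside: "d \<le> i \<Longrightarrow> coord_point d G i = 0"
  by (simp add: coord_point_def)

definition cut_point :: "nat \<Rightarrow> nat set \<Rightarrow> nat set \<Rightarrow> nat \<Rightarrow> real" where
  "cut_point n T S = coord_point (ext_dim n T) (\<lambda>k a b.
     if k = 0 then chi (delta n S) {a, b}
     else if k = 1 then (if set_decode a = S \<inter> T then 1 else 0)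
     else if k = 2 then (if set_decode a = S \<inter> T \<and> b \<notin> S then 1 else 0)
     else if k = 3 then
       (if set_decode a = S \<inter> T then (case prod_decode b of (u, v) \<Rightarrow> chi (delta n S) {u, v}) else 0)
     else 0)"

lemma cut_point_x:
  "finite T \<Longrightarrow> u < v \<Longrightarrow> v < n \<Longrightarrow> cut_point n T S (x_var u v) = chi (delta n S) {u, v}"
  using ext_vars_less_dim(1) by (simp add: cut_point_def x_var_def coord_point_coord)

lemma cut_point_block_values:
  assumes T: "finite T" and A: "A \<in> odd_subsets T"
  shows "cut_point n T S (lambda_var A) = (if A = S \<inter> T then 1 else 0)"
    and "v < n \<Longrightarrow> cut_point n T S (pi_var A v) = (if A = S \<inter> T \<and> v \<notin> S then 1 else 0)"
    and "u < v \<Longrightarrow> v < n \<Longrightarrow>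
      cut_point n T S (z_var A u v) = (if A = S \<inter> T then chi (delta n S) {u, v} else 0)"
proof -
  have "finite A" using A T finite_subset by (auto simp: odd_subsets_def)
  then show "cut_point n T S (lambda_var A) = (if A = S \<inter> T then 1 else 0)"
    and "v < n \<Longrightarrow> cut_point n T S (pi_var A v) = (if A = S \<inter> T \<and> v \<notin> S then 1 else 0)"
    and "u < v \<Longrightarrow> v < n \<Longrightarrow>
      cut_point n T S (z_var A u v) = (if A = S \<inter> T then chi (delta n S) {u, v} else 0)"
    using ext_vars_less_dim[OF T] A
    by (simp_all add: cut_point_def lambda_var_def pi_var_def z_var_def coord_point_coord)
qed

lemma sum_odd_subsets_single:
  "finite T \<Longrightarrow> A0 \<in> odd_subsets T \<Longrightarrow>
    (\<Sum>A\<in>odd_subsets T. if A = A0 then f A else 0) = f A0"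
  by (simp add: finite_odd_subsets)

lemma cut_point_feasible:
  assumes T: "T \<subseteq> V n" and S: "odd (card (S \<inter> T))"
  shows "cut_point n T S \<in> ext_polyhedron n T"
proof -
  have finT: "finite T" using T finite_subset by (auto simp: V_def)
  have A0: "S \<inter> T \<in> odd_subsets T" using S by (simp add: odd_subsets_def)
  have less_n: "a \<in> T \<Longrightarrow> a < n" for a using T by (auto simp: V_def)
  note vals = cut_point_x[OF finT] cut_point_block_values[OF finT]
  have "\<bar>cut_point n T S (pi_var A u) - cut_point n T S (pi_var A v)\<bar> \<le> cut_point n T S (z_var A u v)"
    if "A \<in> odd_subsets T" "u < v" "v < n" for A u v
    using that chi_delta_pair[of u n v S] by (simp add: vals)
  moreover have "(\<Sum>A\<in>odd_subsets T. cut_point n T S (z_var A u v)) \<le> cut_point n T S (x_var u v)"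
    if "u < v" "v < n" for u v
    using that A0 by (simp add: vals sum_odd_subsets_single[OF finT] cong: sum.cong)
  moreover have "(\<Sum>A\<in>odd_subsets T. cut_point n T S (lambda_var A)) = 1"
    using A0 by (simp add: vals sum_odd_subsets_single[OF finT] cong: sum.cong)
  moreover have "cut_point n T S (pi_var A a) = 0" if "A \<in> odd_subsets T" "a \<in> A" for A a
    using that less_n vals(3)[OF that(1)] by (auto simp: odd_subsets_def)
  moreover have "cut_point n T S (lambda_var A) \<le> cut_point n T S (pi_var A b)"
    if "A \<in> odd_subsets T" "b \<in> T - A" for A b
    using that less_n by (auto simp: vals)
  moreover have "cut_point n T S (lambda_var A) \<ge> 0" if "A \<in> odd_subsets T" for A
    using vals(2)[OF that] by simp
  moreover have "cut_point n T S i = 0" if "ext_dim n T \<le> i" for i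
    using that by (simp add: cut_point_def coord_point_outside)
  ultimately show ?thesis
    unfolding mem_ext_polyhedron_iff[OF T] ext_feasible_def by blast
qed

lemma ext_proj_cut_point:
  assumes "T \<subseteq> V n"
  shows "ext_proj n T (cut_point n T S) = chi (delta n S)"
proof
  fix e
  have finT: "finite T" using assms finite_subset by (auto simp: V_def)
  show "ext_proj n T (cut_point n T S) e = chi (delta n S) e"
  proof (cases "e \<in> E n")
    case True
    then obtain u v where "u < v" "v < n" "e = {u, v}" by (rule E_cases)
    then show ?thesis by (simp add: ext_proj_edge[OF finT] cut_point_x[OF finT])
  next
    case False
    then show ?thesis by (simp add: ext_proj_outside chi_def delta_def)
  qed
qed

lemma P_Tcut_subset_ext_proj_image:
  assumes "T \<subseteq> V n"
  shows "P_Tcut n T \<subseteq> ext_proj n T ` ext_polyhedron n T"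
  unfolding P_Tcut_def
proof (rule hull_minimal)
  show "chi ` T_cuts n T \<subseteq> ext_proj n T ` ext_polyhedron n T"
    using cut_point_feasible[OF assms] ext_proj_cut_point[OF assms]
    unfolding T_cuts_def by (auto intro!: image_eqI)
qed (rule convex_ext_proj_image)

text \<open>Raising the coordinates \<open>x\<^sub>u\<^sub>v\<close> preserves feasibility, so the projection is up-closed.\<close>

lemma ext_proj_image_up_closed:
  assumes T: "T \<subseteq> V n" and y: "y \<in> ext_polyhedron n T"
    and r: "\<forall>e\<in>E n. r e \<ge> 0" "\<forall>e. e \<notin> E n \<longrightarrow> r e = 0"
  shows "ext_proj n T y + r \<in> ext_proj n T ` ext_polyhedron n T"
proof -
  have finT: "finite T" using T finite_subset by (auto simp: V_def)
  have less_n: "a \<in> T \<Longrightarrow> a < n" for a using T by (auto simp: V_def)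
  define y' where
    "y' = y + coord_point (ext_dim n T) (\<lambda>k a b. if k = 0 \<and> a < b \<and> b < n then r {a, b} else 0)"
  have shift: "y' (x_var u v) = y (x_var u v) + r {u, v}" if "u < v" "v < n" for u v
    using that ext_vars_less_dim(1)[OF finT] by (simp add: y'_def x_var_def coord_point_coord)
  have keep_lambda: "y' (lambda_var A) = y (lambda_var A)" if "A \<in> odd_subsets T" for A
    using that ext_vars_less_dim(2)[OF finT] by (simp add: y'_def lambda_var_def coord_point_coord)
  have keep_pi: "y' (pi_var A w) = y (pi_var A w)" if "A \<in> odd_subsets T" "w < n" for A w
    using that ext_vars_less_dim(3)[OF finT] by (simp add: y'_def pi_var_def coord_point_coord)
  have keep_z: "y' (z_var A u v) = y (z_var A u v)" if "A \<in> odd_subsets T" "u < v" "v < n" for A u v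
    using that ext_vars_less_dim(4)[OF finT] by (simp add: y'_def z_var_def coord_point_coord)
  have feasible: "ext_feasible n T y" and zero: "\<forall>i\<ge>ext_dim n T. y i = 0"
    using y unfolding mem_ext_polyhedron_iff[OF T] by auto
  have "(\<Sum>A\<in>odd_subsets T. y' (z_var A u v)) \<le> y' (x_var u v)" if uv: "u < v" "v < n" for u v
  proof -
    have "(\<Sum>A\<in>odd_subsets T. y' (z_var A u v)) = (\<Sum>A\<in>odd_subsets T. y (z_var A u v))"
      using uv by (simp add: keep_z)
    also have "\<dots> \<le> y (x_var u v)" using feasible uv by (simp add: ext_feasible_def)
    also have "\<dots> \<le> y' (x_var u v)" using uv r(1) E_pair[of u n v] by (simp add: shift)
    finally show ?thesis .
  qed
  moreover have "\<forall>A\<in>odd_subsets T. \<forall>u v. u < v \<longrightarrow> v < n \<longrightarrow>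
      \<bar>y' (pi_var A u) - y' (pi_var A v)\<bar> \<le> y' (z_var A u v)"
    using feasible by (simp add: ext_feasible_def keep_pi keep_z)
  moreover have "\<forall>A\<in>odd_subsets T. \<forall>b\<in>T - A. y' (lambda_var A) \<le> y' (pi_var A b)"
    using feasible less_n by (simp add: ext_feasible_def keep_lambda keep_pi)
  moreover have "y' (pi_var A a) = 0" if "A \<in> odd_subsets T" "a \<in> A" for A a
  proof -
    have "a < n" using that less_n by (auto simp: odd_subsets_def)
    with that feasible show ?thesis by (simp add: ext_feasible_def keep_pi)
  qed
  moreover have "(\<Sum>A\<in>odd_subsets T. y' (lambda_var A)) = (\<Sum>A\<in>odd_subsets T. y (lambda_var A))"
    by (rule sum.cong) (simp_all add: keep_lambda)
  moreover have "\<forall>A\<in>odd_subsets T. y' (lambda_var A) \<ge> 0"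
    using feasible by (simp add: ext_feasible_def keep_lambda)
  ultimately have "ext_feasible n T y'"
    using feasible unfolding ext_feasible_def by simp
  moreover have "\<forall>i\<ge>ext_dim n T. y' i = 0"
    using zero by (simp add: y'_def coord_point_outside)
  ultimately have "y' \<in> ext_polyhedron n T" by (simp add: mem_ext_polyhedron_iff[OF T])
  moreover have "ext_proj n T y' = ext_proj n T y + r"
  proof
    fix e
    show "ext_proj n T y' e = (ext_proj n T y + r) e"
    proof (cases "e \<in> E n")
      case True
      then obtain u v where "u < v" "v < n" "e = {u, v}" by (rule E_cases)
      then show ?thesis by (simp add: ext_proj_edge[OF finT] shift)
    next
      case False
      then show ?thesis using r(2) by (simp add: ext_proj_outside)
    qed
  qed
  ultimately show ?thesis by (metis image_eqI)
qed

lemma dom_subset_ext_proj_image: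
  assumes T: "T \<subseteq> V n"
  shows "dom_P n (P_Tcut n T) \<subseteq> ext_proj n T ` ext_polyhedron n T"
proof
  fix X assume "X \<in> dom_P n (P_Tcut n T)"
  then obtain p r where X: "X = p + r" and p: "p \<in> P_Tcut n T"
    and r: "\<forall>e\<in>E n. r e \<ge> 0" "\<forall>e. e \<notin> E n \<longrightarrow> r e = 0"
    unfolding dom_P_def by blast
  obtain y where "y \<in> ext_polyhedron n T" "p = ext_proj n T y"
    using P_Tcut_subset_ext_proj_image[OF T] p by blast
  with ext_proj_image_up_closed[OF T _ r] show "X \<in> ext_proj n T ` ext_polyhedron n T"
    unfolding X by blast
qed

definition clamp01 :: "real \<Rightarrow> real" where "clamp01 x = max 0 (min 1 x)"

lemma abs_clamp01_diff_le: "\<bar>clamp01 x - clamp01 y\<bar> \<le> \<bar>x - y\<bar>"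
  by (auto simp: clamp01_def abs_if max_def min_def)

lemma ext_block_cut_bound:
  assumes T: "T \<subseteq> V n" and y: "ext_feasible n T y"
    and A: "A \<in> odd_subsets T" and pos: "y (lambda_var A) > 0"
  shows "\<exists>p\<in>P_Tcut n T. \<forall>u v. u < v \<longrightarrow> v < n \<longrightarrow> y (lambda_var A) * p {u, v} \<le> y (z_var A u v)"
proof -
  let ?l = "y (lambda_var A)"
  define c where "c v = clamp01 (y (pi_var A v) / ?l)" for v
  have "cut_bounded n T c"
  proof (rule cut_bounded_potential)
    show "A \<subseteq> T" "odd (card A)" using A by (auto simp: odd_subsets_def)
    show "\<forall>a\<in>A. c a = 0" using y A by (simp add: ext_feasible_def c_def clamp01_def)
    show "\<forall>b\<in>T - A. c b = 1"
      using y A pos by (auto simp: ext_feasible_def c_def clamp01_def le_divide_eq_1)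
  qed (use T in \<open>auto simp: c_def clamp01_def\<close>)
  then obtain p where p: "p \<in> P_Tcut n T"
    and le: "\<And>u v. u < n \<Longrightarrow> v < n \<Longrightarrow> u \<noteq> v \<Longrightarrow> p {u, v} \<le> \<bar>c u - c v\<bar>"
    unfolding cut_bounded_def by blast
  have "?l * p {u, v} \<le> y (z_var A u v)" if "u < v" "v < n" for u v
  proof -
    have "p {u, v} \<le> \<bar>c u - c v\<bar>" using le that by simp
    also have "\<dots> \<le> \<bar>y (pi_var A u) / ?l - y (pi_var A v) / ?l\<bar>"
      unfolding c_def by (rule abs_clamp01_diff_le)
    finally have "?l * p {u, v} \<le> ?l * \<bar>y (pi_var A u) / ?l - y (pi_var A v) / ?l\<bar>"
      using pos by simp
    also have "\<dots> = \<bar>y (pi_var A u) - y (pi_var A v)\<bar>"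
      using pos by (simp add: abs_mult[symmetric] diff_divide_distrib[symmetric])
    also have "\<dots> \<le> y (z_var A u v)" using y A that by (simp add: ext_feasible_def)
    finally show ?thesis .
  qed
  with p show ?thesis by blast
qed

lemma ext_proj_image_subset_dom:
  assumes T: "T \<subseteq> V n"
  shows "ext_proj n T ` ext_polyhedron n T \<subseteq> dom_P n (P_Tcut n T)"
proof
  fix X assume "X \<in> ext_proj n T ` ext_polyhedron n T"
  then obtain y where "y \<in> ext_polyhedron n T" and X: "X = ext_proj n T y" by blast
  then have y: "ext_feasible n T y" by (simp add: mem_ext_polyhedron_iff[OF T])
  have finT: "finite T" using T finite_subset by (auto simp: V_def)
  let ?l = "\<lambda>A. y (lambda_var A)"
  define active where "active = {A \<in> odd_subsets T. ?l A > 0}"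
  have fin: "finite active" using finite_odd_subsets[OF finT] by (simp add: active_def)
  have l_nonneg: "A \<in> odd_subsets T \<Longrightarrow> ?l A \<ge> 0" for A
    using y by (simp add: ext_feasible_def)
  have z_nonneg: "y (z_var A u v) \<ge> 0" if "A \<in> odd_subsets T" "u < v" "v < n" for A u v
  proof -
    have "\<bar>y (pi_var A u) - y (pi_var A v)\<bar> \<le> y (z_var A u v)"
      using y that by (simp add: ext_feasible_def)
    then show ?thesis by (rule order_trans[OF abs_ge_zero])
  qed
  have "(\<Sum>A\<in>active. ?l A) = (\<Sum>A\<in>odd_subsets T. ?l A)"
    using finite_odd_subsets[OF finT] l_nonneg unfolding active_def
    by (intro sum.mono_neutral_left) force+
  then have sum_active: "(\<Sum>A\<in>active. ?l A) = 1" using y by (simp add: ext_feasible_def)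
  have "\<forall>A\<in>active. \<exists>p\<in>P_Tcut n T.
      \<forall>u v. u < v \<longrightarrow> v < n \<longrightarrow> ?l A * p {u, v} \<le> y (z_var A u v)"
    using ext_block_cut_bound[OF T y] by (simp add: active_def)
  then obtain q where q: "\<And>A. A \<in> active \<Longrightarrow> q A \<in> P_Tcut n T"
    "\<And>A u v. A \<in> active \<Longrightarrow> u < v \<Longrightarrow> v < n \<Longrightarrow> ?l A * q A {u, v} \<le> y (z_var A u v)"
    using bchoice[of active] by (metis (no_types, lifting))
  define p where "p = (\<Sum>A\<in>active. ?l A *\<^sub>R q A)"
  have p: "p \<in> P_Tcut n T"
    unfolding p_def
  proof (rule convex_sum[OF fin _ sum_active])
    show "convex (P_Tcut n T)" by (simp add: P_Tcut_def)
  qed (use q(1) l_nonneg in \<open>auto simp: active_def\<close>)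
  have "p e \<le> X e" if "e \<in> E n" for e
  proof -
    obtain u v where uv: "u < v" "v < n" "e = {u, v}" using \<open>e \<in> E n\<close> by (rule E_cases)
    have "p e = (\<Sum>A\<in>active. ?l A * q A {u, v})" by (simp add: p_def sum_fun_apply uv(3))
    also have "\<dots> \<le> (\<Sum>A\<in>active. y (z_var A u v))" using q(2) uv by (intro sum_mono) auto
    also have "\<dots> \<le> (\<Sum>A\<in>odd_subsets T. y (z_var A u v))"
      using finite_odd_subsets[OF finT] z_nonneg uv by (intro sum_mono2) (auto simp: active_def)
    also have "\<dots> \<le> y (x_var u v)" using y uv by (simp add: ext_feasible_def)
    finally show ?thesis by (simp add: X ext_proj_edge[OF finT uv(1,2)] uv(3))
  qed
  moreover have "X e = p e" if "e \<notin> E n" for e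
    using that p by (simp add: X ext_proj_outside P_Tcut_vanishes)
  ultimately have "X = p + (X - p)" "\<forall>e\<in>E n. (X - p) e \<ge> 0" "\<forall>e. e \<notin> E n \<longrightarrow> (X - p) e = 0"
    by auto
  with p show "X \<in> dom_P n (P_Tcut n T)" unfolding dom_P_def by blast
qed

lemma dom_P_Tcut_eq_ext_proj_image:
  "T \<subseteq> V n \<Longrightarrow> dom_P n (P_Tcut n T) = ext_proj n T ` ext_polyhedron n T"
  using dom_subset_ext_proj_image ext_proj_image_subset_dom by blast

section \<open>Counting the inequalities\<close>

lemma finite_ext_constraints:
  assumes "finite T"
  shows "finite (ext_constraints n T)"
proof -
  have "finite (Sigma (odd_subsets T) B)" if "\<And>A. A \<in> odd_subsets T \<Longrightarrow> B A \<subseteq> T" for B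
    using assms that by (intro finite_SigmaI finite_odd_subsets) (auto intro: finite_subset)
  moreover have "A \<in> odd_subsets T \<Longrightarrow> id A \<subseteq> T" for A by (simp add: odd_subsets_def)
  ultimately show ?thesis
    unfolding ext_constraints_def lambda_nonneg_constraints_def lambda_sum_constraints_def
      pi_zero_constraints_def pi_lower_constraints_def z_abs_constraints_def x_sum_constraints_def
    using assms by (simp add: finite_edge_pairs finite_odd_subsets)
qed

lemma card_image_Un_image_le: "finite S \<Longrightarrow> card (f ` S \<union> g ` S) \<le> 2 * card S"
  using card_Un_le[of "f ` S" "g ` S"] card_image_le[of S f] card_image_le[of S g] by linarith

lemma card_ext_constraints_le:
  assumes T: "T \<subseteq> V n"
  defines "a \<equiv> card (odd_subsets T)"
  shows "card (ext_constraints n T) \<le> a + 2 + 3 * (a * n) + 2 * (a * (n * n)) + n * n"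
proof -
  have finT: "finite T" using T finite_subset by (auto simp: V_def)
  have fin: "finite (odd_subsets T)" using finite_odd_subsets[OF finT] .
  have finA: "finite A" if "A \<in> odd_subsets T" for A
    using that finT finite_subset by (auto simp: odd_subsets_def)
  have blocks: "card (Sigma (odd_subsets T) B) \<le> a * n"
    if "\<And>A. A \<in> odd_subsets T \<Longrightarrow> B A \<subseteq> T" for B
  proof -
    have "card (Sigma (odd_subsets T) B) \<le> card (odd_subsets T \<times> {..<n})"
      using that T fin by (intro card_mono) (auto simp: V_def)
    then show ?thesis by (simp add: card_cartesian_product a_def)
  qed
  have pairs: "card (odd_subsets T \<times> edge_pairs n) \<le> a * (n * n)"
    using card_edge_pairs_le by (simp add: card_cartesian_product a_def)
  have "card (lambda_nonneg_constraints T) \<le> a"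
    unfolding lambda_nonneg_constraints_def a_def by (rule card_image_le[OF fin])
  moreover have "card (lambda_sum_constraints T) \<le> 2"
    unfolding lambda_sum_constraints_def by (simp add: card_insert_le_m1)
  moreover have "card (pi_zero_constraints T) \<le> 2 * (a * n)"
  proof -
    have "finite (Sigma (odd_subsets T) id)" using fin finA by auto
    then have "card (pi_zero_constraints T) \<le> 2 * card (Sigma (odd_subsets T) id)"
      unfolding pi_zero_constraints_def by (rule card_image_Un_image_le)
    also have "\<dots> \<le> 2 * (a * n)" using blocks[of id] by (simp add: odd_subsets_def)
    finally show ?thesis .
  qed
  moreover have "card (pi_lower_constraints T) \<le> a * n"
  proof -
    have "card (pi_lower_constraints T) \<le> card (Sigma (odd_subsets T) (\<lambda>A. T - A))"
      unfolding pi_lower_constraints_def using fin finT by (intro card_image_le) auto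
    also have "\<dots> \<le> a * n" using blocks[of "\<lambda>A. T - A"] by simp
    finally show ?thesis .
  qed
  moreover have "card (z_abs_constraints n T) \<le> 2 * (a * (n * n))"
  proof -
    have "card (z_abs_constraints n T) \<le> 2 * card (odd_subsets T \<times> edge_pairs n)"
      unfolding z_abs_constraints_def
      by (rule card_image_Un_image_le) (simp add: fin finite_edge_pairs)
    then show ?thesis using pairs by linarith
  qed
  moreover have "card (x_sum_constraints n T) \<le> n * n"
    unfolding x_sum_constraints_def
    using card_image_le[OF finite_edge_pairs] card_edge_pairs_le order_trans by blast
  ultimately show ?thesis
    unfolding ext_constraints_def
    using card_Un_le[of "lambda_nonneg_constraints T \<union> lambda_sum_constraints T
        \<union> pi_zero_constraints T \<union> pi_lower_constraints T \<union> z_abs_constraints n T"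
        "x_sum_constraints n T"]
      card_Un_le[of "lambda_nonneg_constraints T \<union> lambda_sum_constraints T
        \<union> pi_zero_constraints T \<union> pi_lower_constraints T" "z_abs_constraints n T"]
      card_Un_le[of "lambda_nonneg_constraints T \<union> lambda_sum_constraints T
        \<union> pi_zero_constraints T" "pi_lower_constraints T"]
      card_Un_le[of "lambda_nonneg_constraints T \<union> lambda_sum_constraints T" "pi_zero_constraints T"]
      card_Un_le[of "lambda_nonneg_constraints T" "lambda_sum_constraints T"]
    by linarith
qed

lemma card_ext_constraints_le_pow:
  assumes T: "T \<subseteq> V n" and n: "n \<ge> 1"
  shows "card (ext_constraints n T) \<le> 9 * n\<^sup>2 * 2 ^ card T"
proof -
  have finT: "finite T" using T finite_subset by (auto simp: V_def)
  define a where "a = card (odd_subsets T)"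
  define P :: nat where "P = 2 ^ card T"
  have "a \<le> P" using card_odd_subsets_le[OF finT] by (simp add: a_def P_def)
  have "1 \<le> P" by (simp add: P_def)
  have "1 \<le> n * n" "n * 1 \<le> n * n" using n by simp_all
  have "a * 1 \<le> P * (n * n)" using \<open>a \<le> P\<close> \<open>1 \<le> n * n\<close> by (rule mult_le_mono)
  moreover have "1 * 1 \<le> P * (n * n)" using \<open>1 \<le> P\<close> \<open>1 \<le> n * n\<close> by (rule mult_le_mono)
  moreover have "a * n \<le> P * (n * n)" using \<open>a \<le> P\<close> \<open>n * 1 \<le> n * n\<close> by (intro mult_le_mono) auto
  moreover have "a * (n * n) \<le> P * (n * n)" using \<open>a \<le> P\<close> by (rule mult_le_mono1)
  moreover have "1 * (n * n) \<le> P * (n * n)" using \<open>1 \<le> P\<close> by (rule mult_le_mono1)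
  ultimately have "card (ext_constraints n T) \<le> 9 * (P * (n * n))"
    using card_ext_constraints_le[OF T] unfolding a_def[symmetric] mult_1_right mult_1_left
    by linarith
  then show ?thesis by (simp add: P_def power2_eq_square mult_ac)
qed

lemma xc_dom_P_Tcut_le:
  assumes "T \<subseteq> V n"
  shows "xc (E n) (dom_P n (P_Tcut n T)) \<le> card (ext_constraints n T)"
proof (rule xc_le_card_constraints)
  show "finite (ext_constraints n T)"
    using assms finite_subset by (intro finite_ext_constraints) (auto simp: V_def)
  show "dom_P n (P_Tcut n T)
      = lin_map (E n) (ext_dim n T) edge_proj ` ineq_polyhedron (ext_dim n T) (ext_constraints n T)"
    using dom_P_Tcut_eq_ext_proj_image[OF assms] by (simp add: ext_proj_def ext_polyhedron_def)
qed

lemma xc_dom_P_Tcut_empty: "xc (E n) (dom_P n (P_Tcut n {})) = 0"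
proof -
  have "T_cuts n {} = {}" unfolding T_cuts_def by auto
  then have empty: "dom_P n (P_Tcut n {}) = {}" unfolding dom_P_def P_Tcut_def by simp
  have "polyhedron_in 0 {}"
    unfolding polyhedron_in_def
    by (rule exI[of _ 1], rule exI[of _ "\<lambda>j i. 0"], rule exI[of _ "\<lambda>j. -1"]) auto
  moreover have "num_facets {} = 0"
    unfolding num_facets_def is_facet_def using face_of_imp_subset by auto
  ultimately have "xc (E n) (dom_P n (P_Tcut n {})) \<le> 0"
    unfolding xc_def empty by (intro Least_le) auto
  then show ?thesis by simp
qed

theorem corollary3:
  shows "\<exists>C::real. C > 0 \<and>
    (\<forall>n T. T \<subseteq> V n \<longrightarrow>
       real (xc (E n) (dom_P n (P_Tcut n T))) \<le> C * real n ^ 2 * 2 ^ card T)"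
proof (intro exI[of _ 9] conjI allI impI)
  fix n T assume T: "T \<subseteq> V n"
  show "real (xc (E n) (dom_P n (P_Tcut n T))) \<le> 9 * real n ^ 2 * 2 ^ card T"
  proof (cases "T = {}")
    case True
    then show ?thesis by (simp add: xc_dom_P_Tcut_empty)
  next
    case False
    then have "n \<ge> 1" using T by (auto simp: V_def)
    have "xc (E n) (dom_P n (P_Tcut n T)) \<le> card (ext_constraints n T)"
      by (rule xc_dom_P_Tcut_le[OF T])
    also have "\<dots> \<le> 9 * n\<^sup>2 * 2 ^ card T"
      by (rule card_ext_constraints_le_pow[OF T \<open>n \<ge> 1\<close>])
    finally have "real (xc (E n) (dom_P n (P_Tcut n T))) \<le> real (9 * n\<^sup>2 * 2 ^ card T)"
      by (rule of_nat_mono)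
    then show ?thesis by simp
  qed
qed simp

end
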